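(* For all integers $k,r\geq2$ and every real $x\geq r(k-1)$, $$\frac{e^{-x}x^{k-1}}{f_{k-1}(x)\,(k-2)!}<\frac{1}{r-1}.$$
   Context: $f_t(x)=e^{-x}\sum_{i\geq t}x^i/i!$. *)

theory Defs
  imports "HOL-Analysis.Analysis"
begin

definition poisson_tail :: "nat \<Rightarrow> real \<Rightarrow> real" where
  "poisson_tail t x = exp (- x) * (\<Sum>i. x ^ (i + t) / fact (i + t))"

end

theory Submission
  imports Defs
begin

text \<open>With \<open>t = k - 1\<close> the quotient equals \<open>t \<cdot> (x^t / t!) / \<Sum>\<^sub>i\<^sub>\<ge>\<^sub>t x^i / i!\<close>.
  The Poisson weights \<open>x^i / i!\<close> increase as long as \<open>i \<le> x\<close>, and \<open>x \<ge> r t\<close>, so each of the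
  first \<open>(r - 1) t + 1\<close> terms of the tail is at least \<open>x^t / t!\<close>. Hence the quotient is at most
  \<open>t / ((r - 1) t + 1) < 1 / (r - 1)\<close>.\<close>

lemma power_over_fact_mono:
  fixes x :: real
  assumes "m \<le> n" and "real n \<le> x"
  shows "x ^ m / fact m \<le> x ^ n / fact n"
  using assms
proof (induction n rule: dec_induct)
  case base
  then show ?case by simp
next
  case (step n)
  have "x ^ m / fact m \<le> x ^ n / fact n"
    using step.IH step.prems by simp
  also have "\<dots> \<le> x ^ n / fact n * (x / real (Suc n))"
  proof -
    have "x ^ n / fact n \<ge> 0" and "x / real (Suc n) \<ge> 1"
      using step.prems by auto
    then show ?thesis
      by (metis mult.right_neutral mult_left_mono)
  qed
  also have "\<dots> = x ^ Suc n / fact (Suc n)"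
    by (simp add: field_simps)
  finally show ?case .
qed

lemma summable_power_over_fact_shift:
  fixes x :: real
  shows "summable (\<lambda>i. x ^ (i + t) / fact (i + t))"
  using summable_exp[of x] by (subst summable_iff_shift) (simp add: field_simps)

lemma power_over_fact_tail_ge:
  fixes x :: real
  assumes "real (t + m) \<le> x"
  shows "real (Suc m) * (x ^ t / fact t) \<le> (\<Sum>i. x ^ (i + t) / fact (i + t))"
proof -
  have "x \<ge> 0"
    using assms by linarith
  have "real (Suc m) * (x ^ t / fact t) = (\<Sum>i<Suc m. x ^ t / fact t)"
    by simp
  also have "\<dots> \<le> (\<Sum>i<Suc m. x ^ (i + t) / fact (i + t))"
    using assms by (intro sum_mono power_over_fact_mono) auto
  also have "\<dots> \<le> (\<Sum>i. x ^ (i + t) / fact (i + t))"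
    using \<open>x \<ge> 0\<close> by (intro sum_le_suminf summable_power_over_fact_shift) auto
  finally show ?thesis .
qed

lemma poisson_tail_ratio_le:
  fixes x :: real
  assumes "t \<ge> 1" and "real (t + m) \<le> x"
  shows "exp (- x) * x ^ t / (poisson_tail t x * fact (t - 1)) \<le> real t / real (Suc m)"
proof -
  define c where "c = x ^ t / fact t"
  define S where "S = (\<Sum>i. x ^ (i + t) / fact (i + t))"
  have S_ge: "real (Suc m) * c \<le> S"
    unfolding c_def S_def using assms(2) by (rule power_over_fact_tail_ge)
  have "x > 0"
    using assms by linarith
  then have "c > 0" and "S > 0"
    using S_ge by (auto simp: c_def intro: less_le_trans[rotated])
  have "fact t = real t * fact (t - 1)"
    using assms(1) by (metis Suc_diff_1 fact_Suc less_le_trans of_nat_mult zero_less_one)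
  then have "exp (- x) * x ^ t / (poisson_tail t x * fact (t - 1)) = real t * c / S"
    using \<open>S > 0\<close> assms(1) by (simp add: poisson_tail_def c_def S_def field_simps)
  also have "\<dots> \<le> real t * c / (real (Suc m) * c)"
    using S_ge \<open>c > 0\<close> \<open>S > 0\<close> by (intro divide_left_mono) auto
  also have "\<dots> = real t / real (Suc m)"
    using \<open>c > 0\<close> by simp
  finally show ?thesis .
qed

theorem lemma49:
  fixes k r :: nat and x :: real
  assumes "k \<ge> 2" and "r \<ge> 2" and "x \<ge> real r * (real k - 1)"
  shows "exp (- x) * x ^ (k - 1) / (poisson_tail (k - 1) x * fact (k - 2)) < 1 / (real r - 1)"
proof -
  define t where "t = k - 1"
  define m where "m = (r - 1) * t"
  have "t \<ge> 1" and "k - 2 = t - 1"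
    using assms(1) by (auto simp: t_def)
  have "real (t + m) = real r * real t"
    using assms(2) by (simp add: m_def of_nat_diff algebra_simps)
  also have "\<dots> \<le> x"
    using assms(1,3) by (simp add: t_def of_nat_diff)
  finally have "exp (- x) * x ^ (k - 1) / (poisson_tail (k - 1) x * fact (k - 2)) \<le> real t / real (Suc m)"
    unfolding t_def[symmetric] \<open>k - 2 = t - 1\<close> using \<open>t \<ge> 1\<close> by (intro poisson_tail_ratio_le)
  also have "\<dots> = real t / ((real r - 1) * real t + 1)"
    using assms(2) by (simp add: m_def of_nat_diff)
  also have "\<dots> < 1 / (real r - 1)"
  proof -
    have "real t \<le> real r * real t"
      using assms(2) by (simp add: mult_le_cancel_right1)
    then show ?thesis
      using assms(2) by (simp add: divide_simps algebra_simps)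
  qed
  finally show ?thesis .
qed

end
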